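(* Consider the Kudryashov–Sinelshchikov equation $$F:=u_t+uu_x-(1+u)u_{xx}-u_x^2=0$$ for $u=u(t,x)$. Each of the following pairs $(C^1,C^2)$ is a conserved vector for this equation, i.e. $D_tC^1+D_xC^2=0$ holds on every (sufficiently smooth) solution $u$: (1) $C^1=-u_x e^{-t-x}$, $C^2=\big(u_t+(1+u)u_x\big)e^{-t-x}$; (2) $C^1=\big(\tfrac{u^2}{2}-(1+u)u_x\big)e^{-t-x}$, $C^2=\big(-\tfrac{u^2}{2}+(1+u)u_t+(1+u)u_x\big)e^{-t-x}$; (3) $C^1=\big(-(1+u)+\tfrac{t u^2}{2}-t u u_x\big)e^{-t-x}$, $C^2=\big((1+u)+(1+u)u_x+\tfrac{u^2}{2}+t u u_t-\tfrac{t u^2}{2}\big)e^{-t-x}$.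
   Context: $D_t$ and $D_x$ denote the total derivative operators with respect to $t$ and $x$. *)

theory Defs
  imports "HOL-Analysis.Analysis"
begin

text \<open>Functions of two real variables u(t,x) are curried: u :: real => real => real.
  pt f / px f are the partial derivatives with respect to t / x (for a function
  of (t,x) the total derivatives D_t, D_x coincide with these partial derivatives
  once u is substituted).\<close>

definition pt :: "(real \<Rightarrow> real \<Rightarrow> real) \<Rightarrow> real \<Rightarrow> real \<Rightarrow> real" where
  "pt f t x = deriv (\<lambda>s. f s x) t"

definition px :: "(real \<Rightarrow> real \<Rightarrow> real) \<Rightarrow> real \<Rightarrow> real \<Rightarrow> real" where
  "px f t x = deriv (\<lambda>y. f t y) x"

definition has_partials :: "(real \<Rightarrow> real \<Rightarrow> real) \<Rightarrow> bool" where
  "has_partials f \<longleftrightarrow>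
     (\<forall>t x. (\<lambda>s. f s x) differentiable (at t) \<and> (\<lambda>y. f t y) differentiable (at x))"

definition C2_plane :: "(real \<Rightarrow> real \<Rightarrow> real) \<Rightarrow> bool" where
  "C2_plane u \<longleftrightarrow>
     has_partials u \<and> has_partials (pt u) \<and> has_partials (px u) \<and>
     (\<forall>g \<in> {u, pt u, px u, pt (pt u), pt (px u), px (pt u), px (px u)}.
        continuous_on UNIV (\<lambda>(t, x). g t x))"

end

theory Submission
  imports Defs
begin

text \<open>Once \<open>u\<^sub>t\<^sub>x = u\<^sub>x\<^sub>t\<close> is known, a direct computation shows that each of the three
  divergences equals \<open>-e\<^sup>-\<^sup>t\<^sup>-\<^sup>x F\<close>, where \<open>F\<close> is the left-hand side of the equation:
  the three conserved vectors share the characteristic \<open>-e\<^sup>-\<^sup>t\<^sup>-\<^sup>x\<close>, and they are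
  conserved because \<open>F\<close> vanishes on solutions.\<close>

lemma double_difference_mean_value:
  fixes f ft ftx :: "real \<Rightarrow> real \<Rightarrow> real"
  assumes ft: "\<And>s y. ((\<lambda>s. f s y) has_real_derivative ft s y) (at s)"
    and ftx: "\<And>s y. ((\<lambda>y. ft s y) has_real_derivative ftx s y) (at y)"
    and "h > 0"
  obtains s y where "t < s" "s < t + h" "x < y" "y < x + h"
    "f (t + h) (x + h) - f (t + h) x - f t (x + h) + f t x = h * h * ftx s y"
proof -
  have "\<And>s. ((\<lambda>s. f s (x + h) - f s x) has_real_derivative ft s (x + h) - ft s x) (at s)"
    by (intro DERIV_diff ft)
  then obtain s where s: "t < s" "s < t + h"
    "f (t + h) (x + h) - f (t + h) x - (f t (x + h) - f t x) = h * (ft s (x + h) - ft s x)"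
    using MVT2[of t "t + h" "\<lambda>s. f s (x + h) - f s x" "\<lambda>s. ft s (x + h) - ft s x"] \<open>h > 0\<close> by auto
  obtain y where "x < y" "y < x + h" "ft s (x + h) - ft s x = h * ftx s y"
    using MVT2[of x "x + h" "ft s" "ftx s"] ftx \<open>h > 0\<close> by auto
  with s show ?thesis
    using that by (auto simp: algebra_simps)
qed

lemma dist_in_open_square:
  fixes a b t x h :: real
  assumes "t < a" "a < t + h" "x < b" "b < x + h"
  shows "dist (a, b) (t, x) < 2 * h"
proof -
  have "dist (a, b) (t, x) = sqrt ((a - t)\<^sup>2 + (b - x)\<^sup>2)"
    by (simp add: dist_Pair_Pair dist_real_def)
  also have "\<dots> \<le> \<bar>a - t\<bar> + \<bar>b - x\<bar>"
    by (rule sqrt_sum_squares_le_sum_abs)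
  also have "\<dots> < 2 * h"
    using assms by simp
  finally show ?thesis .
qed

lemma mixed_partials_eq:
  fixes f ft fx ftx fxt :: "real \<Rightarrow> real \<Rightarrow> real"
  assumes ft: "\<And>s y. ((\<lambda>s. f s y) has_real_derivative ft s y) (at s)"
    and fx: "\<And>s y. ((\<lambda>y. f s y) has_real_derivative fx s y) (at y)"
    and ftx: "\<And>s y. ((\<lambda>y. ft s y) has_real_derivative ftx s y) (at y)"
    and fxt: "\<And>s y. ((\<lambda>s. fx s y) has_real_derivative fxt s y) (at s)"
    and cont_ftx: "continuous (at (t, x)) (\<lambda>(s, y). ftx s y)"
    and cont_fxt: "continuous (at (t, x)) (\<lambda>(s, y). fxt s y)"
  shows "ftx t x = fxt t x"
proof (rule ccontr)
  assume "ftx t x \<noteq> fxt t x"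
  define e where "e = \<bar>ftx t x - fxt t x\<bar> / 2"
  have "e > 0"
    using \<open>ftx t x \<noteq> fxt t x\<close> by (simp add: e_def)
  obtain d1 where "d1 > 0" and d1: "\<And>s y. dist (s, y) (t, x) < d1 \<Longrightarrow> \<bar>ftx s y - ftx t x\<bar> < e"
    using cont_ftx \<open>e > 0\<close> unfolding continuous_at_eps_delta dist_real_def by fastforce
  obtain d2 where "d2 > 0" and d2: "\<And>s y. dist (s, y) (t, x) < d2 \<Longrightarrow> \<bar>fxt s y - fxt t x\<bar> < e"
    using cont_fxt \<open>e > 0\<close> unfolding continuous_at_eps_delta dist_real_def by fastforce
  define h where "h = min d1 d2 / 2"
  have "h > 0" "2 * h \<le> d1" "2 * h \<le> d2"
    using \<open>d1 > 0\<close> \<open>d2 > 0\<close> by (auto simp: h_def)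
  obtain s1 y1 where s1y1: "t < s1" "s1 < t + h" "x < y1" "y1 < x + h"
    "f (t + h) (x + h) - f (t + h) x - f t (x + h) + f t x = h * h * ftx s1 y1"
    using double_difference_mean_value[OF ft ftx \<open>h > 0\<close>] .
  obtain y2 s2 where s2y2: "x < y2" "y2 < x + h" "t < s2" "s2 < t + h"
    "f (t + h) (x + h) - f t (x + h) - f (t + h) x + f t x = h * h * fxt s2 y2"
    using double_difference_mean_value[of "\<lambda>y s. f s y", OF fx fxt \<open>h > 0\<close>] .
  have "ftx s1 y1 = fxt s2 y2"
    using s1y1(5) s2y2(5) \<open>h > 0\<close> by (simp add: algebra_simps)
  moreover have "\<bar>ftx s1 y1 - ftx t x\<bar> < e"
    using d1 dist_in_open_square[of t s1 h x y1] s1y1 \<open>2 * h \<le> d1\<close> by force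
  moreover have "\<bar>fxt s2 y2 - fxt t x\<bar> < e"
    using d2 dist_in_open_square[of t s2 h x y2] s2y2 \<open>2 * h \<le> d2\<close> by force
  ultimately show False
    unfolding e_def by (simp add: abs_if split: if_splits)
qed

lemma has_partials_pt:
  "has_partials f \<Longrightarrow> ((\<lambda>s. f s x) has_real_derivative pt f t x) (at t within S)"
  unfolding has_partials_def pt_def
  using DERIV_deriv_iff_real_differentiable has_field_derivative_at_within by blast

lemma has_partials_px:
  "has_partials f \<Longrightarrow> ((\<lambda>y. f t y) has_real_derivative px f t x) (at x within S)"
  unfolding has_partials_def px_def
  using DERIV_deriv_iff_real_differentiable has_field_derivative_at_within by blast

lemma C2_plane_has_partials:
  assumes "C2_plane u"
  shows "has_partials u" "has_partials (pt u)" "has_partials (px u)"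
  using assms by (simp_all add: C2_plane_def)

lemma C2_plane_mixed_partials:
  assumes "C2_plane u"
  shows "px (pt u) t x = pt (px u) t x"
proof (rule mixed_partials_eq[of u "pt u" "px u" "px (pt u)" "pt (px u)"])
  show "((\<lambda>s. u s y) has_real_derivative pt u s y) (at s)"
    "((\<lambda>y. u s y) has_real_derivative px u s y) (at y)"
    "((\<lambda>y. pt u s y) has_real_derivative px (pt u) s y) (at y)"
    "((\<lambda>s. px u s y) has_real_derivative pt (px u) s y) (at s)" for s y
    using C2_plane_has_partials[OF assms] by (auto intro: has_partials_pt has_partials_px)
  have "continuous_on UNIV (\<lambda>(s, y). px (pt u) s y)"
    "continuous_on UNIV (\<lambda>(s, y). pt (px u) s y)"
    using assms by (auto simp: C2_plane_def)
  then show "continuous (at (t, x)) (\<lambda>(s, y). px (pt u) s y)"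
    "continuous (at (t, x)) (\<lambda>(s, y). pt (px u) s y)"
    by (simp_all add: continuous_on_eq_continuous_at)
qed

definition ks_residual :: "(real \<Rightarrow> real \<Rightarrow> real) \<Rightarrow> real \<Rightarrow> real \<Rightarrow> real" where
  "ks_residual u t x =
     pt u t x + u t x * px u t x - (1 + u t x) * px (px u) t x - (px u t x)\<^sup>2"

lemma divergence_exp_weighted:
  assumes P: "((\<lambda>s. P s x) has_real_derivative Pt) (at t)"
    and Q: "((\<lambda>y. Q t y) has_real_derivative Qx) (at x)"
    and "Pt + Qx - P t x - Q t x = R"
  shows "pt (\<lambda>t x. P t x * exp (- t - x)) t x + px (\<lambda>t x. Q t x * exp (- t - x)) t x
    = R * exp (- t - x)"
proof -
  have "pt (\<lambda>t x. P t x * exp (- t - x)) t x = (Pt - P t x) * exp (- t - x)"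
    unfolding pt_def
    by (rule DERIV_imp_deriv, (rule derivative_eq_intros P refl)+) (simp add: algebra_simps)
  moreover have "px (\<lambda>t x. Q t x * exp (- t - x)) t x = (Qx - Q t x) * exp (- t - x)"
    unfolding px_def
    by (rule DERIV_imp_deriv, (rule derivative_eq_intros Q refl)+) (simp add: algebra_simps)
  ultimately show ?thesis
    unfolding \<open>Pt + Qx - P t x - Q t x = R\<close>[symmetric] by (simp add: algebra_simps)
qed

lemma ks_conservation_law_1:
  assumes "C2_plane u"
  shows "pt (\<lambda>t x. - px u t x * exp (- t - x)) t x
       + px (\<lambda>t x. (pt u t x + (1 + u t x) * px u t x) * exp (- t - x)) t x
     = - ks_residual u t x * exp (- t - x)"
proof (rule divergence_exp_weighted)
  note partials = C2_plane_has_partials[OF assms, THEN has_partials_pt]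
    C2_plane_has_partials[OF assms, THEN has_partials_px]
  show "((\<lambda>s. - px u s x) has_real_derivative - pt (px u) t x) (at t)"
    by (rule derivative_eq_intros partials refl | simp)+
  show "((\<lambda>y. pt u t y + (1 + u t y) * px u t y) has_real_derivative
      px (pt u) t x + px u t x * px u t x + (1 + u t x) * px (px u) t x) (at x)"
    by (rule derivative_eq_intros partials refl | simp)+
qed (simp add: C2_plane_mixed_partials[OF assms] ks_residual_def algebra_simps power2_eq_square)

lemma ks_conservation_law_2:
  assumes "C2_plane u"
  shows "pt (\<lambda>t x. ((u t x)\<^sup>2 / 2 - (1 + u t x) * px u t x) * exp (- t - x)) t x
       + px (\<lambda>t x. (- (u t x)\<^sup>2 / 2 + (1 + u t x) * pt u t x + (1 + u t x) * px u t x)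
                    * exp (- t - x)) t x
     = - ks_residual u t x * exp (- t - x)"
proof (rule divergence_exp_weighted)
  note partials = C2_plane_has_partials[OF assms, THEN has_partials_pt]
    C2_plane_has_partials[OF assms, THEN has_partials_px]
  show "((\<lambda>s. (u s x)\<^sup>2 / 2 - (1 + u s x) * px u s x) has_real_derivative
      u t x * pt u t x - (pt u t x * px u t x + (1 + u t x) * pt (px u) t x)) (at t)"
    by (rule derivative_eq_intros partials refl | simp add: algebra_simps)+
  show "((\<lambda>y. - (u t y)\<^sup>2 / 2 + (1 + u t y) * pt u t y + (1 + u t y) * px u t y)
      has_real_derivative
      - (u t x * px u t x) + (px u t x * pt u t x + (1 + u t x) * px (pt u) t x)
      + (px u t x * px u t x + (1 + u t x) * px (px u) t x)) (at x)"
    by (rule derivative_eq_intros partials refl | simp add: algebra_simps)+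
qed (simp add: C2_plane_mixed_partials[OF assms] ks_residual_def algebra_simps power2_eq_square)

lemma ks_conservation_law_3:
  assumes "C2_plane u"
  shows "pt (\<lambda>t x. (- (1 + u t x) + t * (u t x)\<^sup>2 / 2 - t * u t x * px u t x) * exp (- t - x)) t x
       + px (\<lambda>t x. ((1 + u t x) + (1 + u t x) * px u t x + (u t x)\<^sup>2 / 2
                     + t * u t x * pt u t x - t * (u t x)\<^sup>2 / 2) * exp (- t - x)) t x
     = - ks_residual u t x * exp (- t - x)"
proof (rule divergence_exp_weighted)
  note partials = C2_plane_has_partials[OF assms, THEN has_partials_pt]
    C2_plane_has_partials[OF assms, THEN has_partials_px]
  show "((\<lambda>s. - (1 + u s x) + s * (u s x)\<^sup>2 / 2 - s * u s x * px u s x) has_real_derivative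
      - pt u t x + ((u t x)\<^sup>2 / 2 + t * u t x * pt u t x)
      - (u t x * px u t x + t * pt u t x * px u t x + t * u t x * pt (px u) t x)) (at t)"
    by (rule derivative_eq_intros partials refl | simp add: algebra_simps power2_eq_square)+
  show "((\<lambda>y. (1 + u t y) + (1 + u t y) * px u t y + (u t y)\<^sup>2 / 2
                + t * u t y * pt u t y - t * (u t y)\<^sup>2 / 2) has_real_derivative
      px u t x + (px u t x * px u t x + (1 + u t x) * px (px u) t x) + u t x * px u t x
      + t * (px u t x * pt u t x + u t x * px (pt u) t x) - t * u t x * px u t x) (at x)"
    by (rule derivative_eq_intros partials refl | simp add: algebra_simps power2_eq_square)+
qed (simp add: C2_plane_mixed_partials[OF assms] ks_residual_def algebra_simps power2_eq_square)

theorem mainTheorem5: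
  fixes u :: "real \<Rightarrow> real \<Rightarrow> real"
  assumes smooth: "C2_plane u"
    and pde: "\<forall>t x. pt u t x + u t x * px u t x - (1 + u t x) * px (px u) t x
                      - (px u t x)\<^sup>2 = 0"
  shows
    "(let C1 = (\<lambda>t x. - px u t x * exp (- t - x));
          C2 = (\<lambda>t x. (pt u t x + (1 + u t x) * px u t x) * exp (- t - x))
      in \<forall>t x. pt C1 t x + px C2 t x = 0)
   \<and> (let C1 = (\<lambda>t x. ((u t x)\<^sup>2 / 2 - (1 + u t x) * px u t x) * exp (- t - x));
          C2 = (\<lambda>t x. (- (u t x)\<^sup>2 / 2 + (1 + u t x) * pt u t x
                        + (1 + u t x) * px u t x) * exp (- t - x))
      in \<forall>t x. pt C1 t x + px C2 t x = 0)
   \<and> (let C1 = (\<lambda>t x. (- (1 + u t x) + t * (u t x)\<^sup>2 / 2 - t * u t x * px u t x)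
                        * exp (- t - x));
          C2 = (\<lambda>t x. ((1 + u t x) + (1 + u t x) * px u t x + (u t x)\<^sup>2 / 2
                        + t * u t x * pt u t x - t * (u t x)\<^sup>2 / 2) * exp (- t - x))
      in \<forall>t x. pt C1 t x + px C2 t x = 0)"
proof -
  have "ks_residual u t x = 0" for t x
    using pde by (simp add: ks_residual_def)
  then show ?thesis
    unfolding Let_def
    using ks_conservation_law_1[OF smooth] ks_conservation_law_2[OF smooth]
      ks_conservation_law_3[OF smooth]
    by simp
qed

end
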